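(* Let $f:\mathbb{N}\to\mathbb{R}$ with $f(1)=1$, and suppose $|f|$ is submultiplicative, i.e. $|f(m)|\,|f(n)| \geq |f(mn)|$ for all $m,n\in\mathbb{N}$. Assume there exist $C>0$ and $\gamma\in\mathbb{R}$ such that $|f(n)| \leq C n^\gamma$ for all $n \geq 2$. Then $$|f^{-1}(n)| \leq H(n)\, C^{\Omega(n)} n^{\gamma} \leq C^{\Omega(n)} n^{\gamma+\rho}, \quad n\geq 2,$$ where $\rho=1.72865\dots$ is the unique root $s>1$ of $\zeta(s)=2$.
   Context: The Dirichlet convolution is $(f\ast g)(n)=\sum_{d\mid n} f(n/d)g(d)$; for $f(1)\neq0$, $f^{-1}$ denotes the Dirichlet inverse, the unique arithmetic function with $f\ast f^{-1}=f^{-1}\ast f=\varepsilon$, where $\varepsilon(1)=1$ and $\varepsilon(n)=0$ for $n\ge2$. $\Omega(n)$ is the number of prime factors of $n$ counted with multiplicity. $H(n)$ is the number of ordered factorizations of $n$ into factors $\ge 2$, i.e. $H(n)=\sum_{k\ge1}\#\{(d_1,\dots,d_k): d_1\cdots d_k=n,\ d_i\ge2\}$. $\zeta$ is the Riemann zeta function. *)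

theory Defs
  imports Complex_Main "HOL-Computational_Algebra.Primes"
begin

text \<open>Values at 0 are irrelevant (set to 0).\<close>
function dirichlet_inverse :: "(nat \<Rightarrow> real) \<Rightarrow> nat \<Rightarrow> real" where
  "dirichlet_inverse f n =
     (if n = 0 then 0
      else if n = 1 then 1 / f 1
      else - (\<Sum>d\<in>{d. d dvd n \<and> d < n}. f (n div d) * dirichlet_inverse f d) / f 1)"
  by auto
termination
  by (relation "measure snd") auto

declare dirichlet_inverse.simps [simp del]

definition dirichlet_conv :: "(nat \<Rightarrow> real) \<Rightarrow> (nat \<Rightarrow> real) \<Rightarrow> nat \<Rightarrow> real" where
  "dirichlet_conv f g n = (\<Sum>d\<in>{d. d dvd n}. f (n div d) * g d)"

definition bigOmega :: "nat \<Rightarrow> nat" where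
  "bigOmega n = size (prime_factorization n)"

definition ord_factorizations :: "nat \<Rightarrow> nat" where
  "ord_factorizations n =
     card {ds :: nat list. ds \<noteq> [] \<and> (\<forall>d\<in>set ds. 2 \<le> d) \<and> prod_list ds = n}"

definition zeta_real :: "real \<Rightarrow> real" where
  "zeta_real s = (\<Sum>n. 1 / (real (Suc n)) powr s)"

definition zeta_rho :: real where
  "zeta_rho = (THE s. s > 1 \<and> zeta_real s = 2)"

end

theory Submission
  imports Defs "HOL-Analysis.Analysis"
begin

text \<open>Submultiplicativity of \<open>\<bar>f\<bar>\<close> together with the bound at primes gives
  \<open>\<bar>f m\<bar> \<le> g m\<close> for the completely multiplicative \<open>g m = C ^ \<Omega>(m) * m ^ \<gamma>\<close>.
  Comparing the recursion \<open>f\<^sup>-\<^sup>1(n) = - (\<Sum>d | n, d < n. f (n/d) f\<^sup>-\<^sup>1(d))\<close> with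
  \<open>H n = (\<Sum>d | n, d < n. H d)\<close> then yields \<open>\<bar>f\<^sup>-\<^sup>1(n)\<bar> \<le> H n * g n\<close> by induction.
  Finally \<open>H n \<le> n ^ \<rho>\<close>, again by induction: the inductive bound gives
  \<open>H n \<le> n ^ \<rho> * (\<Sum>d | n, d < n. (n/d) ^ -\<rho>) \<le> n ^ \<rho> (\<zeta>(\<rho>) - 1) = n ^ \<rho>\<close>.
  The root \<open>\<rho>\<close> exists and is unique because \<open>\<zeta>\<close> is continuous and strictly decreasing
  on \<open>(1, \<infinity>)\<close> with \<open>\<zeta>(2) \<le> 2 < \<zeta>(8/7)\<close>.\<close>

section \<open>The real zeta function and \<open>\<rho>\<close>\<close>

lemma summable_zeta_terms:
  assumes "s > 1" shows "summable (\<lambda>n. 1 / real (Suc n) powr s)"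
proof -
  have "summable (\<lambda>n. real n powr (-s))" using assms summable_real_powr_iff by simp
  hence "summable (\<lambda>n. real (Suc n) powr (-s))"
    using summable_Suc_iff[of "\<lambda>n. real n powr (-s)"] by simp
  thus ?thesis by (simp add: powr_minus_divide)
qed

lemma zeta_real_strict_antimono:
  assumes "1 < s" "s < t" shows "zeta_real t < zeta_real s"
proof -
  let ?g = "\<lambda>n. 1 / real (Suc n) powr s - 1 / real (Suc n) powr t"
  have sg: "summable ?g" using summable_zeta_terms assms by (intro summable_diff) auto
  have "0 < suminf ?g"
  proof (rule suminf_pos2[OF sg, of 1])
    fix n
    have "real (Suc n) powr s \<le> real (Suc n) powr t" using assms by (intro powr_mono) auto
    thus "0 \<le> ?g n" by (simp add: frac_le)
  next
    have "(2::real) powr s < 2 powr t" using assms by (intro powr_less_mono) auto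
    thus "0 < ?g 1" by (simp add: frac_less2)
  qed
  also have "suminf ?g = zeta_real s - zeta_real t"
    unfolding zeta_real_def using summable_zeta_terms assms by (intro suminf_diff[symmetric]) auto
  finally show ?thesis by simp
qed

lemma continuous_on_zeta_real:
  assumes "1 < a" shows "continuous_on {a..b} zeta_real"
proof -
  have "uniform_limit {a..b} (\<lambda>n x. \<Sum>i<n. 1 / real (Suc i) powr x)
          (\<lambda>x. \<Sum>i. 1 / real (Suc i) powr x) sequentially"
  proof (rule Weierstrass_m_test[OF _ summable_zeta_terms[OF assms]])
    fix n x assume "x \<in> {a..b}"
    hence "real (Suc n) powr a \<le> real (Suc n) powr x" by (intro powr_mono) auto
    thus "norm (1 / real (Suc n) powr x) \<le> 1 / real (Suc n) powr a"
      by (simp add: frac_le)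
  qed
  hence "continuous_on {a..b} (\<lambda>x. \<Sum>i. 1 / real (Suc i) powr x)"
    by (rule uniform_limit_theorem[rotated]) (auto intro!: always_eventually continuous_intros)
  thus ?thesis unfolding zeta_real_def[abs_def] .
qed

lemma zeta_real_2_le: "zeta_real 2 \<le> 2"
proof -
  let ?h = "\<lambda>n. 2 / real (Suc n)"
  have "?h \<longlonglongrightarrow> 0"
    using LIMSEQ_Suc[OF lim_const_over_n[of 2]] by simp
  hence telescope: "(\<lambda>n. ?h n - ?h (Suc n)) sums 2" using telescope_sums'[of ?h 0] by simp
  have "zeta_real 2 \<le> (\<Sum>n. ?h n - ?h (Suc n))"
    unfolding zeta_real_def
  proof (rule suminf_le)
    fix n
    show "1 / real (Suc n) powr 2 \<le> ?h n - ?h (Suc n)"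
      by (simp add: powr_numeral power2_eq_square divide_simps)
  qed (use summable_zeta_terms[of 2] telescope in \<open>auto simp: sums_iff\<close>)
  also have "\<dots> = 2" using telescope by (simp add: sums_iff)
  finally show ?thesis .
qed

text \<open>Compare the first \<open>2 ^ 7\<close> terms with half the harmonic series, as \<open>k ^ (1/7) \<le> 2\<close> there.\<close>
lemma zeta_real_8_7_gt: "zeta_real (1 + 1/7) > 2"
proof -
  define s :: real where "s = 1 + 1/7"
  have "2 < ln (real 128 + 1) / 2"
  proof -
    have "ln (real 128) = 7 * ln 2" using ln_realpow[of 2 7] by simp
    moreover have "ln (real 128) < ln (real 128 + 1)" by simp
    ultimately show ?thesis using ln2_ge_two_thirds by linarith
  qed
  also have "\<dots> \<le> harm 128 / 2" using harm_ge_ln[of 128] by simp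
  also have "harm 128 / 2 = (\<Sum>i<128. 1 / (2 * real (Suc i)))"
    unfolding harm_def sum_divide_distrib One_nat_def sum.atLeast1_atMost_eq
    by (simp add: field_simps)
  also have "\<dots> \<le> (\<Sum>i<128. 1 / real (Suc i) powr s)"
  proof (rule sum_mono)
    fix i assume "i \<in> {..<(128::nat)}"
    hence "real (Suc i) \<le> 2 ^ 7" by simp
    hence "real (Suc i) powr (1/7) \<le> (2 ^ 7) powr (1/7)" by (intro powr_mono2) auto
    also have "(2 ^ 7 :: real) powr (1/7) = 2"
      by (simp add: powr_powr[symmetric] powr_realpow[symmetric])
    finally have "real (Suc i) * real (Suc i) powr (1/7) \<le> 2 * real (Suc i)"
      by (metis mult.commute mult_left_mono of_nat_0_le_iff)
    moreover have "real (Suc i) powr s = real (Suc i) * real (Suc i) powr (1/7)"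
      unfolding s_def powr_add by simp
    ultimately show "1 / (2 * real (Suc i)) \<le> 1 / real (Suc i) powr s"
      by (intro divide_left_mono) auto
  qed
  also have "\<dots> \<le> zeta_real s" unfolding zeta_real_def
    by (intro sum_le_suminf summable_zeta_terms) (auto simp: s_def)
  finally show ?thesis by (simp add: s_def)
qed

lemma ex1_zeta_real_eq_2: "\<exists>!s. s > 1 \<and> zeta_real s = 2"
proof -
  have "\<exists>x. 1 + 1/7 \<le> x \<and> x \<le> 2 \<and> zeta_real x = 2"
    by (rule IVT2')
       (use zeta_real_2_le zeta_real_8_7_gt continuous_on_zeta_real in \<open>auto intro: less_imp_le\<close>)
  then obtain x where x: "x > 1" "zeta_real x = 2" by force
  moreover have "y = x" if "y > 1" "zeta_real y = 2" for y
    using zeta_real_strict_antimono[of y x] zeta_real_strict_antimono[of x y] x that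
    by (cases y x rule: linorder_cases) auto
  ultimately show ?thesis by blast
qed

lemma zeta_rho_root: "zeta_rho > 1 \<and> zeta_real zeta_rho = 2"
  unfolding zeta_rho_def by (rule theI'[OF ex1_zeta_real_eq_2])

section \<open>Ordered factorizations\<close>

lemma proper_divisor_pos: "d dvd n \<Longrightarrow> d < n \<Longrightarrow> 0 < (d::nat)"
  by (cases d) auto

lemma proper_divisor_cofactor_ge_2:
  fixes d n :: nat
  assumes "d dvd n" "d < n"
  shows "2 \<le> n div d"
proof (rule ccontr)
  assume "\<not> 2 \<le> n div d"
  hence "n div d * d \<le> d" by simp
  thus False using assms by simp
qed

definition factorizations :: "nat \<Rightarrow> nat list set" where
  "factorizations n = {ds. (\<forall>d\<in>set ds. 2 \<le> d) \<and> prod_list ds = n}"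

lemma prod_list_ge_2:
  fixes ds :: "nat list"
  assumes "\<forall>d\<in>set ds. 2 \<le> d" "ds \<noteq> []"
  shows "2 \<le> prod_list ds"
  using assms
proof (induction ds)
  case (Cons a ds)
  have "1 \<le> prod_list ds"
    using Cons by (cases "ds = []") auto
  thus ?case using Cons.prems mult_le_mono[of 2 a 1 "prod_list ds"] by simp
qed simp

lemma factorizations_0: "factorizations 0 = {}"
  using prod_list_ge_2 by (fastforce simp: factorizations_def)

lemma factorizations_1: "factorizations 1 = {[]}"
  using prod_list_ge_2 by (fastforce simp: factorizations_def)

lemma ord_factorizations_eq_card:
  "n \<noteq> 1 \<Longrightarrow> ord_factorizations n = card (factorizations n)"
  unfolding ord_factorizations_def factorizations_def by (metis prod_list.Nil)

lemma factorizations_rec: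
  assumes "n \<ge> 2"
  shows "factorizations n = (\<Union>d\<in>{d. d dvd n \<and> d < n}. (#) (n div d) ` factorizations d)"
proof (intro equalityI subsetI)
  fix ds assume "ds \<in> factorizations n"
  hence ds: "\<forall>d\<in>set ds. 2 \<le> d" "prod_list ds = n" by (auto simp: factorizations_def)
  then obtain a rest where ar: "ds = a # rest" using assms by (cases ds) auto
  let ?d = "prod_list rest"
  have n: "n = a * ?d" using ds ar by simp
  hence "0 < ?d" using assms by (cases "?d") auto
  moreover have "2 \<le> a" using ds ar by auto
  ultimately have "?d dvd n" "?d < n" "n div ?d = a" using n by auto
  moreover have "rest \<in> factorizations ?d" using ds ar by (auto simp: factorizations_def)
  ultimately show "ds \<in> (\<Union>d\<in>{d. d dvd n \<and> d < n}. (#) (n div d) ` factorizations d)"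
    using ar by force
next
  fix ds assume "ds \<in> (\<Union>d\<in>{d. d dvd n \<and> d < n}. (#) (n div d) ` factorizations d)"
  then obtain d rest where d: "d dvd n" "d < n" "rest \<in> factorizations d" "ds = n div d # rest"
    by auto
  show "ds \<in> factorizations n"
    using d proper_divisor_cofactor_ge_2[OF d(1,2)] by (auto simp: factorizations_def)
qed

lemma finite_proper_divisors: "finite {d. d dvd n \<and> d < (n::nat)}"
  by (rule finite_subset[of _ "{..<n}"]) auto

lemma finite_factorizations: "finite (factorizations n)"
proof (induction n rule: less_induct)
  case (less n)
  consider "n = 0" | "n = 1" | "n \<ge> 2" by linarith
  thus ?case
  proof cases
    case 1
    show ?thesis unfolding \<open>n = 0\<close> factorizations_0 by simp
  next
    case 2
    show ?thesis unfolding \<open>n = 1\<close> factorizations_1 by simp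
  next
    case 3
    thus ?thesis using less finite_proper_divisors by (auto simp: factorizations_rec)
  qed
qed

lemma card_factorizations_rec:
  assumes "n \<ge> 2"
  shows "card (factorizations n) = (\<Sum>d\<in>{d. d dvd n \<and> d < n}. card (factorizations d))"
  unfolding factorizations_rec[OF assms]
proof (subst card_UN_disjoint)
  show "\<forall>i\<in>{d. d dvd n \<and> d < n}. \<forall>j\<in>{d. d dvd n \<and> d < n}. i \<noteq> j \<longrightarrow>
          (#) (n div i) ` factorizations i \<inter> (#) (n div j) ` factorizations j = {}"
    by (auto simp: factorizations_def)
qed (auto simp: finite_proper_divisors finite_factorizations card_image)

section \<open>Bounds through a completely multiplicative majorant\<close>

lemma bigOmega_mult: "a \<noteq> 0 \<Longrightarrow> b \<noteq> 0 \<Longrightarrow> bigOmega (a * b) = bigOmega a + bigOmega b"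
  unfolding bigOmega_def by (simp add: prime_factorization_mult)

lemma bigOmega_prime: "prime p \<Longrightarrow> bigOmega p = 1"
  unfolding bigOmega_def by (simp add: prime_factorization_prime)

lemma abs_submultiplicative_le_majorant:
  fixes f g :: "nat \<Rightarrow> real"
  assumes submult: "\<And>m n. m \<ge> 1 \<Longrightarrow> n \<ge> 1 \<Longrightarrow> \<bar>f (m * n)\<bar> \<le> \<bar>f m\<bar> * \<bar>f n\<bar>"
    and g_mult: "\<And>m n. m \<ge> 1 \<Longrightarrow> n \<ge> 1 \<Longrightarrow> g (m * n) = g m * g n"
    and f1: "\<bar>f 1\<bar> \<le> g 1"
    and primes: "\<And>p. prime p \<Longrightarrow> \<bar>f p\<bar> \<le> g p"
  shows "m \<ge> 1 \<Longrightarrow> \<bar>f m\<bar> \<le> g m"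
proof (induction m rule: less_induct)
  case (less m)
  show ?case
  proof (cases "m = 1")
    case False
    then obtain p where p: "prime p" "p dvd m" using less.prems prime_factor_nat[of m] by auto
    then obtain k where k: "m = p * k" by (auto elim: dvdE)
    have "k \<ge> 1" "k < m" using k less.prems p prime_gt_1_nat[of p] by (auto intro: Nat.gr0I)
    moreover have "p \<ge> 1" using prime_gt_0_nat[OF p(1)] by simp
    ultimately have "\<bar>f m\<bar> \<le> \<bar>f p\<bar> * \<bar>f k\<bar>" using submult k by simp
    also have "\<dots> \<le> g p * g k"
      using primes[OF p(1)] less.IH \<open>k < m\<close> \<open>k \<ge> 1\<close> by (intro mult_mono) auto
    also have "\<dots> = g m" using g_mult \<open>k \<ge> 1\<close> \<open>p \<ge> 1\<close> k by simp
    finally show ?thesis .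
  qed (use f1 in simp)
qed

lemma abs_dirichlet_inverse_le_majorant:
  fixes f g :: "nat \<Rightarrow> real"
  assumes f1: "f 1 = 1"
    and f_le: "\<And>m. m \<ge> 1 \<Longrightarrow> \<bar>f m\<bar> \<le> g m"
    and g_mult: "\<And>m n. m \<ge> 1 \<Longrightarrow> n \<ge> 1 \<Longrightarrow> g (m * n) = g m * g n"
  shows "n \<ge> 1 \<Longrightarrow> \<bar>dirichlet_inverse f n\<bar> \<le> card (factorizations n) * g n"
proof (induction n rule: less_induct)
  case (less n)
  show ?case
  proof (cases "n = 1")
    case True
    have "dirichlet_inverse f 1 = 1" using f1 by (subst dirichlet_inverse.simps) simp
    thus ?thesis unfolding True using f1 f_le[of 1] factorizations_1 by simp
  next
    case False
    hence n2: "n \<ge> 2" using less.prems by simp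
    let ?S = "{d. d dvd n \<and> d < n}"
    have "\<bar>dirichlet_inverse f n\<bar> = \<bar>\<Sum>d\<in>?S. f (n div d) * dirichlet_inverse f d\<bar>"
      using n2 f1 by (simp add: dirichlet_inverse.simps[of f n])
    also have "\<dots> \<le> (\<Sum>d\<in>?S. \<bar>f (n div d)\<bar> * \<bar>dirichlet_inverse f d\<bar>)"
      by (rule order_trans[OF sum_abs]) (simp add: abs_mult)
    also have "\<dots> \<le> (\<Sum>d\<in>?S. g (n div d) * (card (factorizations d) * g d))"
    proof (rule sum_mono)
      fix d assume "d \<in> ?S"
      with proper_divisor_pos[of d n] proper_divisor_cofactor_ge_2[of d n]
      have "1 \<le> d" "1 \<le> n div d" "d < n" by auto
      hence "0 \<le> g (n div d)" using f_le[of "n div d"] by linarith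
      thus "\<bar>f (n div d)\<bar> * \<bar>dirichlet_inverse f d\<bar>
          \<le> g (n div d) * (card (factorizations d) * g d)"
        using \<open>1 \<le> d\<close> \<open>1 \<le> n div d\<close> \<open>d < n\<close> by (intro mult_mono f_le less.IH) auto
    qed
    also have "\<dots> = (\<Sum>d\<in>?S. real (card (factorizations d))) * g n"
      unfolding sum_distrib_right
    proof (rule sum.cong[OF refl])
      fix d assume "d \<in> ?S"
      with proper_divisor_pos[of d n] proper_divisor_cofactor_ge_2[of d n]
      have "g n = g (n div d) * g d"
        using g_mult[of "n div d" d] by auto
      thus "g (n div d) * (card (factorizations d) * g d) = card (factorizations d) * g n"
        by simp
    qed
    also have "\<dots> = card (factorizations n) * g n"
      using card_factorizations_rec[OF n2] by simp
    finally show ?thesis .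
  qed
qed

section \<open>Growth of the number of ordered factorizations\<close>

lemma sum_proper_divisors_powr:
  "(\<Sum>d\<in>{d. d dvd n \<and> d < n}. real d powr r)
   = real n powr r * (\<Sum>d\<in>{d. d dvd n \<and> d < n}. 1 / real (n div d) powr r)"
  unfolding sum_distrib_left
proof (rule sum.cong[OF refl])
  fix d assume "d \<in> {d. d dvd n \<and> d < n}"
  hence "2 \<le> n div d" "real (n div d) * real d = real n"
    using proper_divisor_cofactor_ge_2[of d n] by (auto simp flip: of_nat_mult)
  moreover from this(2) have "real n powr r = real (n div d) powr r * real d powr r"
    by (metis of_nat_0_le_iff powr_mult)
  ultimately show "real d powr r = real n powr r * (1 / real (n div d) powr r)"
    by simp
qed

lemma card_factorizations_le_powr:
  assumes "r > 1" "zeta_real r \<le> 2"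
  shows "n \<ge> 1 \<Longrightarrow> card (factorizations n) \<le> real n powr r"
proof (induction n rule: less_induct)
  case (less n)
  show ?case
  proof (cases "n = 1")
    case True
    show ?thesis unfolding True factorizations_1 by simp
  next
    case False
    hence "n \<ge> 2" using less.prems by simp
    let ?S = "{d. d dvd n \<and> d < n}"
    let ?g = "\<lambda>k. 1 / real (Suc k) powr r"
    let ?k = "\<lambda>d. n div d - 1"
    have cofactor: "Suc (?k d) = n div d" "n div d * d = n" if "d \<in> ?S" for d
      using proper_divisor_cofactor_ge_2[of d n] that by auto
    have "inj_on ?k ?S"
    proof (rule inj_onI)
      fix x y assume xy: "x \<in> ?S" "y \<in> ?S" "?k x = ?k y"
      have "2 \<le> n div x" "2 \<le> n div y" using xy(1,2) proper_divisor_cofactor_ge_2 by auto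
      hence "n div x = n div y" using xy(3) by linarith
      hence "n div x * x = n div x * y" using cofactor(2)[OF xy(1)] cofactor(2)[OF xy(2)] by metis
      thus "x = y" using proper_divisor_cofactor_ge_2[of x n] xy(1) by simp
    qed
    have "(\<Sum>d\<in>?S. 1 / real (n div d) powr r) = (\<Sum>d\<in>?S. ?g (?k d))"
      using cofactor(1) by (intro sum.cong) simp_all
    also have "\<dots> = sum ?g (?k ` ?S)"
      using \<open>inj_on ?k ?S\<close> by (simp add: sum.reindex)
    also have "\<dots> = sum ?g (insert 0 (?k ` ?S)) - 1"
    proof -
      have "0 \<notin> ?k ` ?S" using proper_divisor_cofactor_ge_2 by fastforce
      thus ?thesis using finite_proper_divisors by simp
    qed
    also have "\<dots> \<le> zeta_real r - 1"
      unfolding zeta_real_def using summable_zeta_terms[OF assms(1)] finite_proper_divisors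
      by (intro diff_right_mono sum_le_suminf) auto
    also have "\<dots> \<le> 1" using assms(2) by simp
    finally have cofactor_sum: "(\<Sum>d\<in>?S. 1 / real (n div d) powr r) \<le> 1" .
    have "card (factorizations n) = (\<Sum>d\<in>?S. real (card (factorizations d)))"
      using card_factorizations_rec[OF \<open>n \<ge> 2\<close>] by simp
    also have "\<dots> \<le> (\<Sum>d\<in>?S. real d powr r)"
      by (rule sum_mono, rule less.IH) (auto dest: proper_divisor_pos)
    also have "\<dots> = real n powr r * (\<Sum>d\<in>?S. 1 / real (n div d) powr r)"
      by (rule sum_proper_divisors_powr)
    also have "\<dots> \<le> real n powr r"
      using cofactor_sum by (simp add: mult_left_le)
    finally show ?thesis .
  qed
qed

lemma bigOmega_powr_mult:
  fixes C \<gamma> :: real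
  assumes "m \<ge> 1" "k \<ge> 1"
  shows "C ^ bigOmega (m * k) * real (m * k) powr \<gamma>
       = (C ^ bigOmega m * real m powr \<gamma>) * (C ^ bigOmega k * real k powr \<gamma>)"
  using assms by (simp add: bigOmega_mult power_add powr_mult)

lemma abs_dirichlet_inverse_le_bigOmega_powr:
  fixes f :: "nat \<Rightarrow> real" and C \<gamma> :: real
  assumes f1: "f 1 = 1"
    and submult: "\<And>m n. m \<ge> 1 \<Longrightarrow> n \<ge> 1 \<Longrightarrow> \<bar>f (m * n)\<bar> \<le> \<bar>f m\<bar> * \<bar>f n\<bar>"
    and primes: "\<And>p. prime p \<Longrightarrow> \<bar>f p\<bar> \<le> C * real p powr \<gamma>"
    and "n \<ge> 1"
  shows "\<bar>dirichlet_inverse f n\<bar> \<le> card (factorizations n) * (C ^ bigOmega n * real n powr \<gamma>)"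
proof (rule abs_dirichlet_inverse_le_majorant[where g = "\<lambda>m. C ^ bigOmega m * real m powr \<gamma>"])
  show "\<bar>f m\<bar> \<le> C ^ bigOmega m * real m powr \<gamma>" if "m \<ge> 1" for m
  proof (rule abs_submultiplicative_le_majorant[where g = "\<lambda>m. C ^ bigOmega m * real m powr \<gamma>"])
    show "\<bar>f 1\<bar> \<le> C ^ bigOmega 1 * real 1 powr \<gamma>" using f1 by (simp add: bigOmega_def)
    show "\<bar>f p\<bar> \<le> C ^ bigOmega p * real p powr \<gamma>" if "prime p" for p
      using primes[OF that] by (simp add: bigOmega_prime[OF that])
  qed (use submult bigOmega_powr_mult that in auto)
qed (use f1 bigOmega_powr_mult \<open>n \<ge> 1\<close> in auto)

lemma card_factorizations_le_powr_rho: "n \<ge> 1 \<Longrightarrow> card (factorizations n) \<le> real n powr zeta_rho"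
  using card_factorizations_le_powr zeta_rho_root by simp

theorem proposition3p1:
  fixes f :: "nat \<Rightarrow> real" and C \<gamma> :: real
  assumes f1: "f 1 = 1"
    and submult: "\<And>m n. m \<ge> 1 \<Longrightarrow> n \<ge> 1 \<Longrightarrow> \<bar>f m\<bar> * \<bar>f n\<bar> \<ge> \<bar>f (m * n)\<bar>"
    and Cpos: "C > 0"
    and bound: "\<And>n. n \<ge> 2 \<Longrightarrow> \<bar>f n\<bar> \<le> C * real n powr \<gamma>"
  shows "(\<exists>!s. s > 1 \<and> zeta_real s = 2) \<and>
         (\<forall>n\<ge>2. \<bar>dirichlet_inverse f n\<bar>
                   \<le> real (ord_factorizations n) * C ^ bigOmega n * real n powr \<gamma>
               \<and> real (ord_factorizations n) * C ^ bigOmega n * real n powr \<gamma>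
                   \<le> C ^ bigOmega n * real n powr (\<gamma> + zeta_rho))"
proof (intro conjI allI impI ex1_zeta_real_eq_2)
  fix n :: nat assume "n \<ge> 2"
  hence H_eq: "ord_factorizations n = card (factorizations n)" by (simp add: ord_factorizations_eq_card)
  have "\<bar>f p\<bar> \<le> C * real p powr \<gamma>" if "prime p" for p
    using bound prime_ge_2_nat[OF that] by blast
  with abs_dirichlet_inverse_le_bigOmega_powr[OF f1 submult] \<open>n \<ge> 2\<close>
  show "\<bar>dirichlet_inverse f n\<bar> \<le> real (ord_factorizations n) * C ^ bigOmega n * real n powr \<gamma>"
    by (simp add: H_eq mult.assoc)
  have "real (ord_factorizations n) * (C ^ bigOmega n * real n powr \<gamma>)
         \<le> real n powr zeta_rho * (C ^ bigOmega n * real n powr \<gamma>)"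
    using card_factorizations_le_powr_rho[of n] \<open>n \<ge> 2\<close> Cpos
    by (intro mult_right_mono) (simp_all add: H_eq)
  thus "real (ord_factorizations n) * C ^ bigOmega n * real n powr \<gamma>
        \<le> C ^ bigOmega n * real n powr (\<gamma> + zeta_rho)"
    by (simp add: powr_add algebra_simps)
qed

end
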